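(* Let $(A,\mu,\alpha,\beta)$ be a BiHom-commutative algebra (with $\mu(x\otimes y)=x\cdot y$). Let $\gamma,\lambda,\xi:A\to A$ be linear maps such that $\gamma(x\cdot y)=\gamma(x)\cdot\gamma(y)$, $\lambda(x\cdot y)=\lambda(x)\cdot\lambda(y)$ and $\xi(x\cdot y)=\xi(x)\cdot\xi(y)$ for all $x,y\in A$. Let $D:A\to A$ be a linear map, assume that any two of the maps $\alpha,\beta,\gamma,\lambda,\xi,D$ commute, and that $D(a\cdot b)=\gamma(a)\cdot D(b)+D(a)\cdot\gamma(b)$ for all $a,b\in A$. Define a new multiplication on $A$ by $a\ast b=\lambda(a)\cdot\xi D(b)$. Then $(A,\ast,\lambda\alpha,\xi\beta\gamma)$ is a BiHom-Novikov algebra.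
   Context: Work over a field. A BiHom-associative algebra is a 4-tuple $(A,\mu,\alpha,\beta)$ with $\alpha,\beta:A\to A$ linear, $\alpha\beta=\beta\alpha$, $\alpha,\beta$ multiplicative for $\mu$ (written $x\cdot y$), and $\alpha(x)\cdot(y\cdot z)=(x\cdot y)\cdot\beta(z)$ for all $x,y,z$. It is BiHom-commutative if moreover $\beta(a)\cdot\alpha(b)=\beta(b)\cdot\alpha(a)$ for all $a,b$. A BiHom-Novikov algebra is a 4-tuple $(A,\mu,\alpha,\beta)$ with commuting linear $\alpha,\beta$ such that for all $x,y,z$: $\alpha(x\cdot y)=\alpha(x)\cdot\alpha(y)$, $\beta(x\cdot y)=\beta(x)\cdot\beta(y)$, $(\beta(x)\cdot\alpha(y))\cdot\beta(z)-\alpha\beta(x)\cdot(\alpha(y)\cdot z)=(\beta(y)\cdot\alpha(x))\cdot\beta(z)-\alpha\beta(y)\cdot(\alpha(x)\cdot z)$, and $(x\cdot\beta(y))\cdot\alpha\beta(z)=(x\cdot\beta(z))\cdot\alpha\beta(y)$. *)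

theory Defs
  imports Main "HOL.Vector_Spaces"
begin

definition bilinear_map :: "('k::field \<Rightarrow> 'v::ab_group_add \<Rightarrow> 'v) \<Rightarrow> ('v \<Rightarrow> 'v \<Rightarrow> 'v) \<Rightarrow> bool" where
  "bilinear_map sc mu \<longleftrightarrow> (\<forall>x. Vector_Spaces.linear sc sc (mu x)) \<and> (\<forall>y. Vector_Spaces.linear sc sc (\<lambda>x. mu x y))"

definition multiplicative :: "('v \<Rightarrow> 'v \<Rightarrow> 'v) \<Rightarrow> ('v \<Rightarrow> 'v) \<Rightarrow> bool" where
  "multiplicative mu f \<longleftrightarrow> (\<forall>x y. f (mu x y) = mu (f x) (f y))"

definition BiHom_assoc_algebra ::
  "('k::field \<Rightarrow> 'v::ab_group_add \<Rightarrow> 'v) \<Rightarrow> ('v \<Rightarrow> 'v \<Rightarrow> 'v) \<Rightarrow> ('v \<Rightarrow> 'v) \<Rightarrow> ('v \<Rightarrow> 'v) \<Rightarrow> bool" where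
  "BiHom_assoc_algebra sc mu \<alpha> \<beta> \<longleftrightarrow>
     vector_space sc \<and> bilinear_map sc mu \<and> Vector_Spaces.linear sc sc \<alpha> \<and> Vector_Spaces.linear sc sc \<beta> \<and>
     \<alpha> \<circ> \<beta> = \<beta> \<circ> \<alpha> \<and> multiplicative mu \<alpha> \<and> multiplicative mu \<beta> \<and>
     (\<forall>x y z. mu (\<alpha> x) (mu y z) = mu (mu x y) (\<beta> z))"

definition BiHom_comm_algebra ::
  "('k::field \<Rightarrow> 'v::ab_group_add \<Rightarrow> 'v) \<Rightarrow> ('v \<Rightarrow> 'v \<Rightarrow> 'v) \<Rightarrow> ('v \<Rightarrow> 'v) \<Rightarrow> ('v \<Rightarrow> 'v) \<Rightarrow> bool" where
  "BiHom_comm_algebra sc mu \<alpha> \<beta> \<longleftrightarrow>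
     BiHom_assoc_algebra sc mu \<alpha> \<beta> \<and> (\<forall>a b. mu (\<beta> a) (\<alpha> b) = mu (\<beta> b) (\<alpha> a))"

definition BiHom_Novikov_algebra ::
  "('k::field \<Rightarrow> 'v::ab_group_add \<Rightarrow> 'v) \<Rightarrow> ('v \<Rightarrow> 'v \<Rightarrow> 'v) \<Rightarrow> ('v \<Rightarrow> 'v) \<Rightarrow> ('v \<Rightarrow> 'v) \<Rightarrow> bool" where
  "BiHom_Novikov_algebra sc mu \<alpha> \<beta> \<longleftrightarrow>
     vector_space sc \<and> bilinear_map sc mu \<and> Vector_Spaces.linear sc sc \<alpha> \<and> Vector_Spaces.linear sc sc \<beta> \<and>
     \<alpha> \<circ> \<beta> = \<beta> \<circ> \<alpha> \<and> multiplicative mu \<alpha> \<and> multiplicative mu \<beta> \<and>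
     (\<forall>x y z. mu (mu (\<beta> x) (\<alpha> y)) (\<beta> z) - mu (\<alpha> (\<beta> x)) (mu (\<alpha> y) z)
            = mu (mu (\<beta> y) (\<alpha> x)) (\<beta> z) - mu (\<alpha> (\<beta> y)) (mu (\<alpha> x) z)) \<and>
     (\<forall>x y z. mu (mu x (\<beta> y)) (\<alpha> (\<beta> z)) = mu (mu x (\<beta> z)) (\<alpha> (\<beta> y)))"

end

theory Submission
  imports Defs
begin

text \<open>The product a \<cdot> D b of a BiHom-commutative algebra with a \<gamma>-derivation D is
  BiHom-Novikov with structure maps \<alpha> and \<beta>\<gamma> (a BiHom version of the Gelfand-Dorfman
  construction): BiHom-associativity kills every term of the first Novikov identity except
  one, which is symmetric by BiHom-commutativity, and the second identity is a right
  commutativity law of the underlying algebra. The product \<lambda>(a) \<cdot> \<xi>D(b) is then the Yau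
  twist of this Novikov product by the commuting multiplicative maps \<lambda> and \<xi>.\<close>

lemma bilinear_map_twisted:
  assumes "bilinear_map sc mu" "Vector_Spaces.linear sc sc f" "Vector_Spaces.linear sc sc g"
  shows "bilinear_map sc (\<lambda>a b. mu (f a) (g b))"
proof -
  have "Vector_Spaces.linear sc sc (mu (f x) \<circ> g)" for x
    using assms by (intro Vector_Spaces.linear_compose) (auto simp: bilinear_map_def)
  moreover have "Vector_Spaces.linear sc sc ((\<lambda>a. mu a (g y)) \<circ> f)" for y
    using assms by (intro Vector_Spaces.linear_compose) (auto simp: bilinear_map_def)
  ultimately show ?thesis
    by (simp add: bilinear_map_def comp_def)
qed

lemma BiHom_comm_left_comm:
  assumes "BiHom_comm_algebra sc mu \<alpha> \<beta>"
  shows "mu (\<alpha> (\<beta> a)) (mu (\<alpha> b) c) = mu (\<alpha> (\<beta> b)) (mu (\<alpha> a) c)"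
proof -
  have "mu (\<alpha> (\<beta> a)) (mu (\<alpha> b) c) = mu (mu (\<beta> a) (\<alpha> b)) (\<beta> c)"
    using assms by (simp add: BiHom_comm_algebra_def BiHom_assoc_algebra_def)
  also have "\<dots> = mu (mu (\<beta> b) (\<alpha> a)) (\<beta> c)"
    using assms by (simp add: BiHom_comm_algebra_def)
  also have "\<dots> = mu (\<alpha> (\<beta> b)) (mu (\<alpha> a) c)"
    using assms by (simp add: BiHom_comm_algebra_def BiHom_assoc_algebra_def)
  finally show ?thesis .
qed

lemma BiHom_comm_right_comm:
  assumes "BiHom_comm_algebra sc mu \<alpha> \<beta>"
  shows "mu (mu x (\<beta> y)) (\<alpha> (\<beta> z)) = mu (mu x (\<beta> z)) (\<alpha> (\<beta> y))"
proof -
  have assoc: "mu (\<alpha> x) (mu y z) = mu (mu x y) (\<beta> z)"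
    and ab: "\<beta> (\<alpha> z) = \<alpha> (\<beta> z)"
    and bc: "mu (\<beta> a) (\<alpha> b) = mu (\<beta> b) (\<alpha> a)" for x y z a b
    using assms by (auto simp: BiHom_comm_algebra_def BiHom_assoc_algebra_def fun_eq_iff)
  have "mu (mu x (\<beta> y)) (\<alpha> (\<beta> z)) = mu (\<alpha> x) (mu (\<beta> y) (\<alpha> z))"
    using assoc[of x "\<beta> y" "\<alpha> z"] ab by simp
  also have "\<dots> = mu (\<alpha> x) (mu (\<beta> z) (\<alpha> y))"
    by (simp add: bc)
  also have "\<dots> = mu (mu x (\<beta> z)) (\<alpha> (\<beta> y))"
    using assoc[of x "\<beta> z" "\<alpha> y"] ab by simp
  finally show ?thesis .
qed

lemma BiHom_Novikov_Gelfand_Dorfman: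
  assumes A: "BiHom_comm_algebra sc mu \<alpha> \<beta>"
    and lin: "Vector_Spaces.linear sc sc \<gamma>" "Vector_Spaces.linear sc sc D"
    and mult: "multiplicative mu \<gamma>"
    and comm: "\<gamma> \<circ> \<alpha> = \<alpha> \<circ> \<gamma>" "\<gamma> \<circ> \<beta> = \<beta> \<circ> \<gamma>"
      "D \<circ> \<alpha> = \<alpha> \<circ> D" "D \<circ> \<beta> = \<beta> \<circ> D" "D \<circ> \<gamma> = \<gamma> \<circ> D"
    and der: "\<forall>a b. D (mu a b) = mu (\<gamma> a) (D b) + mu (D a) (\<gamma> b)"
  shows "BiHom_Novikov_algebra sc (\<lambda>a b. mu a (D b)) \<alpha> (\<beta> \<circ> \<gamma>)"
proof -
  have vs: "vector_space sc" and bl: "bilinear_map sc mu"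
    and lin_\<alpha>: "Vector_Spaces.linear sc sc \<alpha>" and lin_\<beta>: "Vector_Spaces.linear sc sc \<beta>"
    and assoc: "\<And>x y z. mu (\<alpha> x) (mu y z) = mu (mu x y) (\<beta> z)"
    using A by (auto simp: BiHom_comm_algebra_def BiHom_assoc_algebra_def)
  have C: "\<beta> (\<alpha> x) = \<alpha> (\<beta> x)" "\<gamma> (\<alpha> x) = \<alpha> (\<gamma> x)" "\<gamma> (\<beta> x) = \<beta> (\<gamma> x)"
    "D (\<alpha> x) = \<alpha> (D x)" "D (\<beta> x) = \<beta> (D x)" "D (\<gamma> x) = \<gamma> (D x)" for x
    using A comm by (auto simp: BiHom_comm_algebra_def BiHom_assoc_algebra_def fun_eq_iff)
  have M: "\<alpha> (mu x y) = mu (\<alpha> x) (\<alpha> y)" "\<beta> (mu x y) = mu (\<beta> x) (\<beta> y)"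
    "\<gamma> (mu x y) = mu (\<gamma> x) (\<gamma> y)" for x y
    using A mult by (auto simp: BiHom_comm_algebra_def BiHom_assoc_algebra_def multiplicative_def)
  have first_Novikov_defect:
    "mu (mu (\<beta> (\<gamma> x)) (D (\<alpha> y))) (D (\<beta> (\<gamma> z))) - mu (\<alpha> (\<beta> (\<gamma> x))) (D (mu (\<alpha> y) (D z)))
       = - mu (\<alpha> (\<beta> (\<gamma> x))) (mu (\<alpha> (\<gamma> y)) (D (D z)))" for x y z
  proof -
    have "mu (mu (\<beta> (\<gamma> x)) (D (\<alpha> y))) (D (\<beta> (\<gamma> z)))
        = mu (\<alpha> (\<beta> (\<gamma> x))) (mu (\<alpha> (D y)) (\<gamma> (D z)))"
      by (simp add: assoc[symmetric] C)
    moreover have "D (mu (\<alpha> y) (D z)) = mu (\<alpha> (\<gamma> y)) (D (D z)) + mu (\<alpha> (D y)) (\<gamma> (D z))"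
      by (simp add: der C)
    moreover have "mu a (b + c) = mu a b + mu a c" for a b c
      using bl by (simp add: bilinear_map_def linear_iff)
    ultimately show ?thesis
      by simp
  qed
  show ?thesis
    unfolding BiHom_Novikov_algebra_def
  proof (intro conjI allI)
    show "bilinear_map sc (\<lambda>a b. mu a (D b))"
      using bilinear_map_twisted[OF bl vector_space.linear_id[OF vs] lin(2)] by (simp add: id_def)
    show "Vector_Spaces.linear sc sc (\<beta> \<circ> \<gamma>)"
      using lin(1) lin_\<beta> by (rule Vector_Spaces.linear_compose)
    show "\<alpha> \<circ> (\<beta> \<circ> \<gamma>) = \<beta> \<circ> \<gamma> \<circ> \<alpha>"
      by (simp add: fun_eq_iff C)
    show "multiplicative (\<lambda>a b. mu a (D b)) \<alpha>" "multiplicative (\<lambda>a b. mu a (D b)) (\<beta> \<circ> \<gamma>)"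
      by (simp_all add: multiplicative_def M C)
  next
    fix x y z
    show "mu (mu ((\<beta> \<circ> \<gamma>) x) (D (\<alpha> y))) (D ((\<beta> \<circ> \<gamma>) z)) - mu (\<alpha> ((\<beta> \<circ> \<gamma>) x)) (D (mu (\<alpha> y) (D z)))
        = mu (mu ((\<beta> \<circ> \<gamma>) y) (D (\<alpha> x))) (D ((\<beta> \<circ> \<gamma>) z)) - mu (\<alpha> ((\<beta> \<circ> \<gamma>) y)) (D (mu (\<alpha> x) (D z)))"
      using BiHom_comm_left_comm[OF A, of "\<gamma> x" "\<gamma> y" "D (D z)"]
      by (simp add: first_Novikov_defect)
  next
    fix x y z
    show "mu (mu x (D ((\<beta> \<circ> \<gamma>) y))) (D (\<alpha> ((\<beta> \<circ> \<gamma>) z)))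
        = mu (mu x (D ((\<beta> \<circ> \<gamma>) z))) (D (\<alpha> ((\<beta> \<circ> \<gamma>) y)))"
      using BiHom_comm_right_comm[OF A, of x "\<gamma> (D y)" "\<gamma> (D z)"] by (simp add: C)
  qed (use vs lin_\<alpha> in auto)
qed

lemma BiHom_Novikov_Yau_twist:
  assumes N: "BiHom_Novikov_algebra sc mu \<alpha> \<beta>"
    and lin: "Vector_Spaces.linear sc sc lam" "Vector_Spaces.linear sc sc \<xi>"
    and mult: "multiplicative mu lam" "multiplicative mu \<xi>"
    and comm: "lam \<circ> \<alpha> = \<alpha> \<circ> lam" "lam \<circ> \<beta> = \<beta> \<circ> lam"
      "\<xi> \<circ> \<alpha> = \<alpha> \<circ> \<xi>" "\<xi> \<circ> \<beta> = \<beta> \<circ> \<xi>" "\<xi> \<circ> lam = lam \<circ> \<xi>"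
  shows "BiHom_Novikov_algebra sc (\<lambda>a b. mu (lam a) (\<xi> b)) (lam \<circ> \<alpha>) (\<xi> \<circ> \<beta>)"
proof -
  have vs: "vector_space sc" and bl: "bilinear_map sc mu"
    and lin_\<alpha>: "Vector_Spaces.linear sc sc \<alpha>" and lin_\<beta>: "Vector_Spaces.linear sc sc \<beta>"
    and Novikov_left: "\<And>x y z. mu (mu (\<beta> x) (\<alpha> y)) (\<beta> z) - mu (\<alpha> (\<beta> x)) (mu (\<alpha> y) z)
            = mu (mu (\<beta> y) (\<alpha> x)) (\<beta> z) - mu (\<alpha> (\<beta> y)) (mu (\<alpha> x) z)"
    and Novikov_right: "\<And>x y z. mu (mu x (\<beta> y)) (\<alpha> (\<beta> z)) = mu (mu x (\<beta> z)) (\<alpha> (\<beta> y))"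
    using N by (auto simp: BiHom_Novikov_algebra_def)
  have C: "\<beta> (\<alpha> x) = \<alpha> (\<beta> x)" "lam (\<alpha> x) = \<alpha> (lam x)" "lam (\<beta> x) = \<beta> (lam x)"
    "\<xi> (\<alpha> x) = \<alpha> (\<xi> x)" "\<xi> (\<beta> x) = \<beta> (\<xi> x)" "\<xi> (lam x) = lam (\<xi> x)" for x
    using N comm by (auto simp: BiHom_Novikov_algebra_def fun_eq_iff)
  have M: "\<alpha> (mu x y) = mu (\<alpha> x) (\<alpha> y)" "\<beta> (mu x y) = mu (\<beta> x) (\<beta> y)"
    "lam (mu x y) = mu (lam x) (lam y)" "\<xi> (mu x y) = mu (\<xi> x) (\<xi> y)" for x y
    using N mult by (auto simp: BiHom_Novikov_algebra_def multiplicative_def)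
  show ?thesis
    unfolding BiHom_Novikov_algebra_def
  proof (intro conjI allI)
    show "bilinear_map sc (\<lambda>a b. mu (lam a) (\<xi> b))"
      using bl lin by (rule bilinear_map_twisted)
    show "Vector_Spaces.linear sc sc (lam \<circ> \<alpha>)"
      using lin_\<alpha> lin(1) by (rule Vector_Spaces.linear_compose)
    show "Vector_Spaces.linear sc sc (\<xi> \<circ> \<beta>)"
      using lin_\<beta> lin(2) by (rule Vector_Spaces.linear_compose)
    show "lam \<circ> \<alpha> \<circ> (\<xi> \<circ> \<beta>) = \<xi> \<circ> \<beta> \<circ> (lam \<circ> \<alpha>)"
      by (simp add: fun_eq_iff C)
    show "multiplicative (\<lambda>a b. mu (lam a) (\<xi> b)) (lam \<circ> \<alpha>)"
      "multiplicative (\<lambda>a b. mu (lam a) (\<xi> b)) (\<xi> \<circ> \<beta>)"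
      by (simp_all add: multiplicative_def M C)
  next
    fix x y z
    show "mu (lam (mu (lam ((\<xi> \<circ> \<beta>) x)) (\<xi> ((lam \<circ> \<alpha>) y)))) (\<xi> ((\<xi> \<circ> \<beta>) z))
          - mu (lam ((lam \<circ> \<alpha>) ((\<xi> \<circ> \<beta>) x))) (\<xi> (mu (lam ((lam \<circ> \<alpha>) y)) (\<xi> z)))
        = mu (lam (mu (lam ((\<xi> \<circ> \<beta>) y)) (\<xi> ((lam \<circ> \<alpha>) x)))) (\<xi> ((\<xi> \<circ> \<beta>) z))
          - mu (lam ((lam \<circ> \<alpha>) ((\<xi> \<circ> \<beta>) y))) (\<xi> (mu (lam ((lam \<circ> \<alpha>) x)) (\<xi> z)))"
      using Novikov_left[of "lam (lam (\<xi> x))" "lam (lam (\<xi> y))" "\<xi> (\<xi> z)"] by (simp add: M C)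
  next
    fix x y z
    show "mu (lam (mu (lam x) (\<xi> ((\<xi> \<circ> \<beta>) y)))) (\<xi> ((lam \<circ> \<alpha>) ((\<xi> \<circ> \<beta>) z)))
        = mu (lam (mu (lam x) (\<xi> ((\<xi> \<circ> \<beta>) z)))) (\<xi> ((lam \<circ> \<alpha>) ((\<xi> \<circ> \<beta>) y)))"
      using Novikov_right[of "lam (lam x)" "lam (\<xi> (\<xi> y))" "lam (\<xi> (\<xi> z))"] by (simp add: M C)
  qed (use vs in auto)
qed

theorem proposition2p7:
  fixes sc :: "'k::field \<Rightarrow> 'v::ab_group_add \<Rightarrow> 'v"
    and mu :: "'v \<Rightarrow> 'v \<Rightarrow> 'v"
    and \<alpha> \<beta> \<gamma> lam \<xi> D :: "'v \<Rightarrow> 'v"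
  assumes A: "BiHom_comm_algebra sc mu \<alpha> \<beta>"
    and lin: "Vector_Spaces.linear sc sc \<gamma>" "Vector_Spaces.linear sc sc lam" "Vector_Spaces.linear sc sc \<xi>" "Vector_Spaces.linear sc sc D"
    and mult: "multiplicative mu \<gamma>" "multiplicative mu lam" "multiplicative mu \<xi>"
    and comm: "\<forall>f\<in>{\<alpha>, \<beta>, \<gamma>, lam, \<xi>, D}. \<forall>g\<in>{\<alpha>, \<beta>, \<gamma>, lam, \<xi>, D}. f \<circ> g = g \<circ> f"
    and der: "\<forall>a b. D (mu a b) = mu (\<gamma> a) (D b) + mu (D a) (\<gamma> b)"
  shows "BiHom_Novikov_algebra sc (\<lambda>a b. mu (lam a) (\<xi> (D b))) (lam \<circ> \<alpha>) (\<xi> \<circ> \<beta> \<circ> \<gamma>)"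
proof -
  have commute: "f \<circ> g = g \<circ> f" if "f \<in> {\<alpha>, \<beta>, \<gamma>, lam, \<xi>, D}" "g \<in> {\<alpha>, \<beta>, \<gamma>, lam, \<xi>, D}" for f g
    using comm that by blast
  then have commute_pointwise: "f (g x) = g (f x)"
    if "f \<in> {\<alpha>, \<beta>, \<gamma>, lam, \<xi>, D}" "g \<in> {\<alpha>, \<beta>, \<gamma>, lam, \<xi>, D}" for f g x
    using that by (metis comp_apply)
  let ?GD = "\<lambda>a b. mu a (D b)"
  have GD: "BiHom_Novikov_algebra sc ?GD \<alpha> (\<beta> \<circ> \<gamma>)"
    by (rule BiHom_Novikov_Gelfand_Dorfman[OF A lin(1,4) mult(1) _ _ _ _ _ der])
      (simp_all add: commute)
  have D_lam: "D (lam b) = lam (D b)" and D_\<xi>: "D (\<xi> b) = \<xi> (D b)" for b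
    by (simp_all add: commute_pointwise)
  have "multiplicative ?GD lam" "multiplicative ?GD \<xi>"
    using mult by (simp_all add: multiplicative_def D_lam D_\<xi>)
  with GD lin(2,3)
  have "BiHom_Novikov_algebra sc (\<lambda>a b. ?GD (lam a) (\<xi> b)) (lam \<circ> \<alpha>) (\<xi> \<circ> (\<beta> \<circ> \<gamma>))"
    by (rule BiHom_Novikov_Yau_twist) (simp_all add: commute fun_eq_iff commute_pointwise)
  then show ?thesis
    by (simp add: comp_assoc D_\<xi>)
qed

end
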